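(* Let $1\le p<2$, $f\in\mathcal H_0$, and let $u$ solve $\partial_tu+\partial J(u)\ni0$, $u(0)=f$, with extinction time $T_{\mathrm{ex}}$. Then for $0<t<T_{\mathrm{ex}}$, $$(2-p)\lambda_1(T_{\mathrm{ex}}-t)\le\|u(t)\|^{2-p}\le(2-p)\Lambda(t)(T_{\mathrm{ex}}-t).$$
   Context: $\mathcal H$ is a real Hilbert space with inner product $\langle\cdot,\cdot\rangle$ and norm $\|\cdot\|$. $J:\mathcal H\to\mathbb R\cup\{\infty\}$ is convex, lower semicontinuous, proper, with dense effective domain, and absolutely $p$-homogeneous: $J(cu)=|c|^pJ(u)$ for $c\ne0$, $J(0)=0$. Standing coercivity assumption: $\lambda_1:=\inf_{u\in\mathcal H_0}pJ(u)/\|u\|^p>0$. $\partial J(u)=\{\zeta: J(u)+\langle\zeta,v-u\rangle\le J(v)\ \forall v\}$; $\mathcal N(J)=\{u:J(u)=0\}$; $\mathcal H_0:=\mathcal N(J)^\perp\setminus\{0\}$. The gradient flow solution (Brezis) is the unique continuous $u:[0,\infty)\to\mathcal H$, Lipschitz on $[\delta,\infty)$ for all $\delta>0$, right-differentiable on $(0,\infty)$ with $u(0)=f$ and $\partial_t^+u(t)=-\zeta(t)$, $\zeta(t)$ the minimal-norm element of $\partial J(u(t))$. $T_{\mathrm{ex}}:=\inf\{T>0:u(t)=0\ \forall t\ge T\}$ (finite for $p<2$). $\Lambda(t):=pJ(u(t))/\|u(t)\|^p$ for $0<t<T_{\mathrm{ex}}$. *)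

theory Defs
  imports "HOL-Analysis.Analysis" "HOL-Library.Extended_Real"
begin

definition convex_fun :: "('a::real_vector \<Rightarrow> ereal) \<Rightarrow> bool" where
  "convex_fun J \<longleftrightarrow> (\<forall>x y. \<forall>a::real. 0 \<le> a \<and> a \<le> 1 \<longrightarrow>
      J ((1 - a) *\<^sub>R x + a *\<^sub>R y) \<le> ereal (1 - a) * J x + ereal a * J y)"

definition lsc_fun :: "('a::topological_space \<Rightarrow> ereal) \<Rightarrow> bool" where
  "lsc_fun J \<longleftrightarrow> (\<forall>c::ereal. closed {x. J x \<le> c})"

definition proper_fun :: "('a \<Rightarrow> ereal) \<Rightarrow> bool" where
  "proper_fun J \<longleftrightarrow> (\<forall>x. J x \<noteq> -\<infinity>) \<and> (\<exists>x. J x \<noteq> \<infinity>)"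

definition eff_dom :: "('a \<Rightarrow> ereal) \<Rightarrow> 'a set" where
  "eff_dom J = {x. J x < \<infinity>}"

definition abs_homogeneous :: "real \<Rightarrow> ('a::real_vector \<Rightarrow> ereal) \<Rightarrow> bool" where
  "abs_homogeneous p J \<longleftrightarrow> J 0 = 0 \<and>
     (\<forall>c u. c \<noteq> 0 \<longrightarrow> J (c *\<^sub>R u) = ereal (\<bar>c\<bar> powr p) * J u)"

definition nullspace :: "('a \<Rightarrow> ereal) \<Rightarrow> 'a set" where
  "nullspace J = {u. J u = 0}"

definition H0 :: "('a::real_inner \<Rightarrow> ereal) \<Rightarrow> 'a set" where
  "H0 J = {u. u \<noteq> 0 \<and> (\<forall>w \<in> nullspace J. inner u w = 0)}"

definition subdiff :: "('a::real_inner \<Rightarrow> ereal) \<Rightarrow> 'a \<Rightarrow> 'a set" where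
  "subdiff J u = {\<zeta>. \<forall>v. J u + ereal (inner \<zeta> (v - u)) \<le> J v}"

definition lambda1 :: "real \<Rightarrow> ('a::real_inner \<Rightarrow> ereal) \<Rightarrow> ereal" where
  "lambda1 p J = (INF u \<in> H0 J. ereal p * J u / ereal (norm u powr p))"

text \<open>Brezis gradient flow solution of \<open>\<partial>\<^sub>t u + \<partial>J(u) \<ni> 0\<close>, \<open>u(0) = f\<close>;
  only the restriction of \<open>u\<close> to \<open>[0,\<infinity>)\<close> is relevant.\<close>
definition gradient_flow :: "('a::real_inner \<Rightarrow> ereal) \<Rightarrow> 'a \<Rightarrow> (real \<Rightarrow> 'a) \<Rightarrow> bool" where
  "gradient_flow J f u \<longleftrightarrow>
     continuous_on {0..} u \<and>
     (\<forall>\<delta>>0. \<exists>L. L-lipschitz_on {\<delta>..} u) \<and>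
     u 0 = f \<and>
     (\<forall>t>0. \<exists>\<zeta>. \<zeta> \<in> subdiff J (u t) \<and> (\<forall>z \<in> subdiff J (u t). norm \<zeta> \<le> norm z) \<and>
              (u has_vector_derivative (- \<zeta>)) (at t within {t..}))"

definition extinction_times :: "(real \<Rightarrow> 'a::zero) \<Rightarrow> real set" where
  "extinction_times u = {T. T > 0 \<and> (\<forall>t\<ge>T. u t = 0)}"

definition T_ex :: "(real \<Rightarrow> 'a::zero) \<Rightarrow> real" where
  "T_ex u = Inf (extinction_times u)"

definition Rayleigh :: "real \<Rightarrow> ('a::real_normed_vector \<Rightarrow> ereal) \<Rightarrow> (real \<Rightarrow> 'a) \<Rightarrow> real \<Rightarrow> ereal" where
  "Rayleigh p J u t = ereal p * J (u t) / ereal (norm (u t) powr p)"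

end

theory Submission
  imports Defs
begin

text \<open>
  By Euler's identity \<open>\<langle>\<zeta>, u\<rangle> = p J(u)\<close> for the \<open>p\<close>-homogeneous \<open>J\<close>, the flow satisfies
  \<open>d/dt \<parallel>u\<parallel>\<^bsup>2-p\<^esup> = -(2-p) \<Lambda>(t)\<close>. Subgradients are orthogonal to \<open>N(J)\<close>, so \<open>u(t)\<close> stays in
  \<open>H\<^sub>0\<close> and \<open>\<Lambda>(t) \<ge> \<lambda>\<^sub>1\<close>; integrating up to the extinction time gives the lower bound (and
  finite extinction in the first place). For the upper bound, \<open>\<Lambda>\<close> is nonincreasing: formally
  \<open>d/dt log \<Lambda> = -\<parallel>\<zeta>\<parallel>\<^sup>2/J(u) + p\<^sup>2 J(u)/\<parallel>u\<parallel>\<^sup>2 \<le> 0\<close> by Cauchy-Schwarz applied to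
  \<open>\<langle>\<zeta>, u\<rangle> = p J(u)\<close>. As \<open>t \<mapsto> J(u(t))\<close> is not known to be differentiable, this is made
  rigorous with lower right Dini derivatives: along times \<open>y \<down> t\<close> with
  \<open>\<langle>\<zeta>(t), \<zeta>(y)\<rangle> \<ge> \<parallel>\<zeta>(t)\<parallel>\<^sup>2 - \<epsilon>\<close>, the subgradient inequality at \<open>u(y)\<close> bounds the
  increment of \<open>J(u)\<close> by \<open>-(\<parallel>\<zeta>(t)\<parallel>\<^sup>2 - 2\<epsilon>)(y - t)\<close>.
\<close>

section \<open>Lower right Dini derivatives\<close>

definition lower_right_Dini_le :: "(real \<Rightarrow> real) \<Rightarrow> real \<Rightarrow> real \<Rightarrow> bool" where
  "lower_right_Dini_le g x c \<longleftrightarrow> (\<forall>e>0. \<exists>\<^sub>F y in at_right x. g y \<le> g x + (c + e) * (y - x))"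

lemma lower_right_Dini_le_mono:
  "lower_right_Dini_le g x c \<Longrightarrow> c \<le> d \<Longrightarrow> lower_right_Dini_le g x d"
  unfolding lower_right_Dini_le_def
proof (intro allI impI)
  fix e :: real assume fr: "\<forall>e>0. \<exists>\<^sub>F y in at_right x. g y \<le> g x + (c + e) * (y - x)"
    and cd: "c \<le> d" and e: "0 < e"
  have "\<exists>\<^sub>F y in at_right x. g y \<le> g x + (c + e) * (y - x) \<and> x < y"
    using fr e by (intro frequently_eventually_frequently eventually_at_right_less) auto
  then show "\<exists>\<^sub>F y in at_right x. g y \<le> g x + (d + e) * (y - x)"
    by (rule frequently_elim1) (use cd in \<open>auto intro: order_trans mult_right_mono\<close>)
qed

lemma has_right_derivative_eventually_le:
  assumes "(g has_real_derivative D) (at x within {x..})" and "0 < e"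
  shows "\<forall>\<^sub>F y in at_right x. g y \<le> g x + (D + e) * (y - x)"
proof -
  have "((\<lambda>y. (g y - g x) / (y - x)) \<longlongrightarrow> D) (at_right x)"
    using assms(1) unfolding has_field_derivative_iff at_within_Ici_at_right .
  then have "\<forall>\<^sub>F y in at_right x. (g y - g x) / (y - x) < D + e"
    using assms(2) by (intro order_tendstoD(2)) auto
  with eventually_at_right_less show ?thesis
    by eventually_elim (simp add: divide_less_eq)
qed

lemma has_right_derivative_imp_lower_right_Dini_le:
  "(g has_real_derivative D) (at x within {x..}) \<Longrightarrow> lower_right_Dini_le g x D"
  unfolding lower_right_Dini_le_def
  by (auto intro: eventually_frequently has_right_derivative_eventually_le)

lemma lower_right_Dini_le_add_right_derivative:
  assumes f: "lower_right_Dini_le f x c" and g: "(g has_real_derivative D) (at x within {x..})"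
  shows "lower_right_Dini_le (\<lambda>y. f y + g y) x (c + D)"
  unfolding lower_right_Dini_le_def
proof (intro allI impI)
  fix e :: real assume e: "0 < e"
  have "\<exists>\<^sub>F y in at_right x. f y \<le> f x + (c + e/2) * (y - x)"
    using f e unfolding lower_right_Dini_le_def by simp
  moreover have "\<forall>\<^sub>F y in at_right x. g y \<le> g x + (D + e/2) * (y - x)"
    using g e by (intro has_right_derivative_eventually_le) auto
  ultimately show "\<exists>\<^sub>F y in at_right x. f y + g y \<le> f x + g x + (c + D + e) * (y - x)"
  proof (rule frequently_eventually_frequently[THEN frequently_elim1])
    fix y
    have "(c + D + e) * (y - x) = (c + e/2) * (y - x) + (D + e/2) * (y - x)"
      by (simp add: algebra_simps)
    then show "f y \<le> f x + (c + e/2) * (y - x) \<and> g y \<le> g x + (D + e/2) * (y - x) \<Longrightarrow>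
        f y + g y \<le> f x + g x + (c + D + e) * (y - x)"
      by linarith
  qed
qed

lemma lower_right_Dini_le_ln:
  assumes f: "lower_right_Dini_le f x c" and pos: "0 < f x"
    and ev_pos: "\<forall>\<^sub>F y in at_right x. 0 < f y"
  shows "lower_right_Dini_le (\<lambda>y. ln (f y)) x (c / f x)"
  unfolding lower_right_Dini_le_def
proof (intro allI impI)
  fix e :: real assume e: "0 < e"
  have "\<exists>\<^sub>F y in at_right x. f y \<le> f x + (c + e * f x) * (y - x)"
    using f e pos unfolding lower_right_Dini_le_def by simp
  moreover have "\<forall>\<^sub>F y in at_right x. 0 < f y \<and> x < y"
    using ev_pos eventually_at_right_less by (rule eventually_conj)
  ultimately show "\<exists>\<^sub>F y in at_right x. ln (f y) \<le> ln (f x) + (c / f x + e) * (y - x)"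
  proof (rule frequently_eventually_frequently[THEN frequently_elim1])
    fix y assume y: "f y \<le> f x + (c + e * f x) * (y - x) \<and> 0 < f y \<and> x < y"
    have "ln (f y) - ln (f x) = ln (f y / f x)"
      using y pos by (simp add: ln_div)
    also have "\<dots> \<le> f y / f x - 1"
      using y pos by (intro ln_le_minus_one) simp
    also have "\<dots> = (f y - f x) / f x"
      using pos by (simp add: diff_divide_distrib)
    also have "\<dots> \<le> (c + e * f x) * (y - x) / f x"
      using y pos by (intro divide_right_mono) auto
    also have "\<dots> = (c / f x + e) * (y - x)"
      using pos by (simp add: field_simps)
    finally show "ln (f y) \<le> ln (f x) + (c / f x + e) * (y - x)" by simp
  qed
qed

lemma lower_right_Dini_nonpos_imp_le_Ico:
  fixes g :: "real \<Rightarrow> real"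
  assumes ab: "a \<le> b" and cont: "continuous_on {a..b} g"
    and Dini: "\<And>x. x \<in> {a..<b} \<Longrightarrow> lower_right_Dini_le g x 0"
  shows "g b \<le> g a"
proof -
  have "g b \<le> g a + e * (b - a)" if e: "e > 0" for e
  proof -
    define S where "S = {x\<in>{a..b}. g x \<le> g a + e * (x - a)}"
    have "closed S"
      unfolding S_def by (intro continuous_on_closed_Collect_le cont continuous_intros)
    moreover have "a \<in> S" and bdd: "bdd_above S"
      using ab by (auto simp: S_def bdd_above_def)
    ultimately have cS: "Sup S \<in> S"
      using closed_contains_Sup by blast
    have "Sup S = b"
    proof (rule ccontr)
      assume "Sup S \<noteq> b"
      with cS have c: "a \<le> Sup S" "Sup S < b" by (auto simp: S_def)
      have "\<exists>\<^sub>F y in at_right (Sup S). g y \<le> g (Sup S) + e * (y - Sup S) \<and> Sup S < y \<and> y < b"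
        using Dini[of "Sup S"] c e unfolding lower_right_Dini_le_def
        by (intro frequently_eventually_frequently) (auto simp: eventually_at_right[OF c(2)])
      then obtain y where y: "g y \<le> g (Sup S) + e * (y - Sup S)" "Sup S < y" "y < b"
        using frequently_ex by blast
      have "y \<in> S" using cS y c by (auto simp: S_def algebra_simps)
      then show False using y(2) bdd cSup_upper not_le by blast
    qed
    then show ?thesis using cS by (simp add: S_def)
  qed
  note key = this
  show ?thesis
  proof (cases "a = b")
    case False
    with ab have "b - a > 0" by simp
    show ?thesis
    proof (rule field_le_epsilon)
      fix e :: real assume "0 < e"
      with key[of "e / (b - a)"] \<open>b - a > 0\<close> show "g b \<le> g a + e" by simp
    qed
  qed simp
qed

lemma lower_right_Dini_nonpos_imp_le:
  fixes g :: "real \<Rightarrow> real"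
  assumes ab: "a \<le> b" and cont: "continuous_on {a..b} g"
    and Dini: "\<And>x. x \<in> {a<..<b} \<Longrightarrow> lower_right_Dini_le g x 0"
  shows "g b \<le> g a"
proof (cases "a = b")
  case False
  with ab have "a < b" by simp
  have "g b \<le> g x" if "a < x" "x \<le> b" for x
    by (rule lower_right_Dini_nonpos_imp_le_Ico) (use that in \<open>auto intro: continuous_on_subset[OF cont] Dini\<close>)
  then have ev: "\<forall>\<^sub>F x in at_right a. g b \<le> g x"
    unfolding eventually_at_right[OF \<open>a < b\<close>] by (intro exI[of _ b]) (use \<open>a < b\<close> in auto)
  have lim: "(g \<longlongrightarrow> g a) (at_right a)"
    using cont \<open>a < b\<close> unfolding continuous_on_def
    by (metis at_within_Icc_at_right atLeastAtMost_iff order_refl ab)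
  show ?thesis
    by (rule tendsto_lowerbound[OF lim ev]) simp
qed simp

lemma right_derivative_le_imp_le:
  fixes g :: "real \<Rightarrow> real"
  assumes ab: "a \<le> b" and cont: "continuous_on {a..b} g"
    and deriv: "\<And>x. x \<in> {a<..<b} \<Longrightarrow> (g has_real_derivative g' x) (at x within {x..})"
    and bound: "\<And>x. x \<in> {a<..<b} \<Longrightarrow> g' x \<le> c"
  shows "g b - g a \<le> c * (b - a)"
proof -
  have "g b - c * b \<le> g a - c * a"
  proof (rule lower_right_Dini_nonpos_imp_le[OF ab])
    show "continuous_on {a..b} (\<lambda>y. g y - c * y)"
      by (intro continuous_intros cont)
    fix x assume x: "x \<in> {a<..<b}"
    have "((\<lambda>y. g y - c * y) has_real_derivative g' x - c) (at x within {x..})"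
      using deriv[OF x] by (auto intro!: derivative_eq_intros)
    then show "lower_right_Dini_le (\<lambda>y. g y - c * y) x 0"
      using bound[OF x] by (auto intro: lower_right_Dini_le_mono has_right_derivative_imp_lower_right_Dini_le)
  qed
  then show ?thesis by (simp add: algebra_simps)
qed

lemma right_derivative_ge_imp_ge:
  fixes g :: "real \<Rightarrow> real"
  assumes ab: "a \<le> b" and cont: "continuous_on {a..b} g"
    and deriv: "\<And>x. x \<in> {a<..<b} \<Longrightarrow> (g has_real_derivative g' x) (at x within {x..})"
    and bound: "\<And>x. x \<in> {a<..<b} \<Longrightarrow> c \<le> g' x"
  shows "c * (b - a) \<le> g b - g a"
proof -
  have "- g b - - g a \<le> - c * (b - a)"
  proof (rule right_derivative_le_imp_le[OF ab])
    show "continuous_on {a..b} (\<lambda>y. - g y)" using cont by (rule continuous_on_minus)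
  qed (use deriv bound in \<open>auto intro: DERIV_minus\<close>)
  then show ?thesis by simp
qed

section \<open>Convex absolutely homogeneous functionals\<close>

locale homogeneous_convex_functional =
  fixes J :: "'a::real_inner \<Rightarrow> ereal" and p :: real
  assumes p_le_2: "p \<le> 2" and convex: "convex_fun J" and proper: "proper_fun J"
    and homogeneous: "abs_homogeneous p J"
begin

lemma J_0: "J 0 = 0"
  using homogeneous by (simp add: abs_homogeneous_def)

lemma J_scaleR: "c \<noteq> 0 \<Longrightarrow> J (c *\<^sub>R u) = ereal (\<bar>c\<bar> powr p) * J u"
  using homogeneous by (simp add: abs_homogeneous_def)

lemma J_uminus: "J (- u) = J u"
  using J_scaleR[of "-1" u] by simp

lemma J_not_MInfty: "J u \<noteq> -\<infinity>"
  using proper by (simp add: proper_fun_def)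

lemma J_nonneg: "0 \<le> J u"
proof -
  have "J ((1 - 1/2) *\<^sub>R u + (1/2) *\<^sub>R (- u)) \<le> ereal (1 - 1/2) * J u + ereal (1/2) * J (- u)"
    using convex[unfolded convex_fun_def, rule_format, of "1/2" u "- u"] by simp
  then have "0 \<le> ereal (1/2) * J u + ereal (1/2) * J u"
    by (simp add: J_0 J_uminus)
  then show ?thesis
    using J_not_MInfty[of u] by (cases "J u") auto
qed

lemma subdiff_imp_J_real:
  assumes "z \<in> subdiff J x"
  shows "J x = ereal (real_of_ereal (J x))"
proof -
  obtain y where "J y \<noteq> \<infinity>"
    using proper by (auto simp: proper_fun_def)
  moreover have "J x + ereal (inner z (y - x)) \<le> J y"
    using assms by (simp add: subdiff_def)
  ultimately have "J x \<noteq> \<infinity>" by auto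
  then show ?thesis
    using J_not_MInfty[of x] by (cases "J x") auto
qed

lemma subgradient_inequality:
  assumes "z \<in> subdiff J x" "J x = ereal jx" "J y = ereal jy"
  shows "jx + inner z (y - x) \<le> jy"
  using assms by (auto simp: subdiff_def elim!: allE[of _ y])

lemma subdiff_inner_self:
  assumes z: "z \<in> subdiff J x" and j: "J x = ereal j"
  shows "inner z x = p * j"
proof -
  have ineq: "j + (c - 1) * inner z x \<le> c powr p * j" if "c > 0" for c
    using subgradient_inequality[OF z j, of "c *\<^sub>R x" "c powr p * j"] J_scaleR[of c x] that j
    by (simp add: inner_diff_right algebra_simps)
  have "((\<lambda>c. c powr p) has_real_derivative p * 1 powr (p - 1)) (at 1)"
    by (rule has_real_derivative_powr) simp
  then have lim: "((\<lambda>c. (c powr p - 1) / (c - 1)) \<longlongrightarrow> p) (at 1)"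
    unfolding has_field_derivative_iff by simp
  have limr: "((\<lambda>c. (c powr p - 1) / (c - 1) * j) \<longlongrightarrow> p * j) (at_right 1)"
    by (intro tendsto_intros tendsto_mono[OF at_le lim]) simp
  have liml: "((\<lambda>c. (c powr p - 1) / (c - 1) * j) \<longlongrightarrow> p * j) (at_left 1)"
    by (intro tendsto_intros tendsto_mono[OF at_le lim]) simp
  have "inner z x \<le> (c powr p - 1) / (c - 1) * j" if "1 < c" for c
    using ineq[of c] that by (simp add: field_simps)
  then have "inner z x \<le> p * j"
    using eventually_at_right_less[of "1::real"]
    by (intro tendsto_lowerbound[OF limr]) (auto elim: eventually_mono)
  moreover have "(c powr p - 1) / (c - 1) * j \<le> inner z x" if "0 < c" "c < 1" for c
    using ineq[of c] that by (simp add: field_simps)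
  then have "p * j \<le> inner z x"
    using eventually_at_left_real[of 0 "1::real", OF zero_less_one]
    by (intro tendsto_upperbound[OF liml]) (auto elim: eventually_mono)
  ultimately show ?thesis by simp
qed

lemma J_add_nullspace_le:
  assumes j: "J x = ereal j" and n: "n \<in> nullspace J" and a: "0 < a" "a < 1"
  shows "J (x + s *\<^sub>R n) \<le> ereal (j / (1 - a))"
proof (cases "s = 0")
  case True
  have "0 \<le> j" using J_nonneg[of x] j by simp
  then have "j \<le> j / (1 - a)" using a by (simp add: le_divide_eq mult_left_le)
  then show ?thesis using True j by simp
next
  case False
  define B where "B = 1 / (1 - a)"
  have B: "1 \<le> B" using a by (simp add: B_def)
  have "J (x + s *\<^sub>R n) = J ((1 - a) *\<^sub>R (B *\<^sub>R x) + a *\<^sub>R ((s / a) *\<^sub>R n))"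
    using a by (simp add: B_def)
  also have "\<dots> \<le> ereal (1 - a) * J (B *\<^sub>R x) + ereal a * J ((s / a) *\<^sub>R n)"
    using convex[unfolded convex_fun_def, rule_format, of a "B *\<^sub>R x" "(s / a) *\<^sub>R n"] a by simp
  also have "\<dots> = ereal ((1 - a) * B powr p * j)"
    using J_scaleR[of B x] J_scaleR[of "s / a" n] B a False j n by (simp add: nullspace_def)
  also have "(1 - a) * B powr p = B powr (p - 1)"
    using a B by (simp add: B_def powr_diff powr_divide field_simps)
  also have "B powr (p - 1) * j \<le> B * j"
    using B p_le_2 J_nonneg[of x] j powr_mono[of "p - 1" 1 B] by (intro mult_right_mono) auto
  finally show ?thesis by (simp add: B_def)
qed

lemma subdiff_orthogonal_nullspace:
  assumes z: "z \<in> subdiff J x" and n: "n \<in> nullspace J"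
  shows "inner z n = 0"
proof -
  obtain j where j: "J x = ereal j"
    using subdiff_imp_J_real[OF z] by blast
  have "j + s * inner z n \<le> j" for s
  proof (rule tendsto_lowerbound)
    have "((\<lambda>a. j / (1 - a)) \<longlongrightarrow> j / (1 - 0)) (at_right 0)"
      by (intro tendsto_divide tendsto_diff tendsto_const tendsto_ident_at) simp
    then show "((\<lambda>a. j / (1 - a)) \<longlongrightarrow> j) (at_right 0)"
      by simp
    have bound: "j + s * inner z n \<le> j / (1 - a)" if "0 < a" "a < 1" for a
    proof -
      have "J x + ereal (inner z ((x + s *\<^sub>R n) - x)) \<le> J (x + s *\<^sub>R n)"
        using z unfolding subdiff_def by blast
      also have "\<dots> \<le> ereal (j / (1 - a))"
        by (rule J_add_nullspace_le[OF j n that])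
      finally show ?thesis using j by simp
    qed
    show "\<forall>\<^sub>F a in at_right 0. j + s * inner z n \<le> j / (1 - a)"
      using eventually_at_right_real[OF zero_less_one] by eventually_elim (auto intro: bound)
  qed simp
  from this[of 1] this[of "-1"] show ?thesis by simp
qed

end

section \<open>Subgradient flows\<close>

text \<open>\<open>Z\<close> is any selection of subgradients with \<open>\<partial>\<^sub>t\<^sup>+ u = -Z\<close>.\<close>

locale subgradient_flow = homogeneous_convex_functional J p
  for J :: "'a::real_inner \<Rightarrow> ereal" and p +
  fixes u Z :: "real \<Rightarrow> 'a" and f :: 'a
  assumes p_pos: "0 < p" and p_less_2: "p < 2"
    and lambda1_pos: "lambda1 p J > 0"
    and f_H0: "f \<in> H0 J" and u_0: "u 0 = f"
    and u_cont: "continuous_on {0..} u"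
    and u_lipschitz: "\<And>\<delta>. \<delta> > 0 \<Longrightarrow> \<exists>L. L-lipschitz_on {\<delta>..} u"
    and Z_subdiff: "\<And>t. t > 0 \<Longrightarrow> Z t \<in> subdiff J (u t)"
    and u_has_right_derivative: "\<And>t. t > 0 \<Longrightarrow> (u has_vector_derivative - Z t) (at t within {t..})"
begin

definition energy :: "real \<Rightarrow> real" where
  "energy t = real_of_ereal (J (u t))"

lemma J_u_eq_energy: "t > 0 \<Longrightarrow> J (u t) = ereal (energy t)"
  unfolding energy_def using subdiff_imp_J_real[OF Z_subdiff] by blast

lemma energy_nonneg: "t > 0 \<Longrightarrow> 0 \<le> energy t"
  using J_nonneg[of "u t"] J_u_eq_energy[of t] by simp

lemma inner_Z_u: "t > 0 \<Longrightarrow> inner (Z t) (u t) = p * energy t"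
  using subdiff_inner_self[OF Z_subdiff J_u_eq_energy] by blast

lemma continuous_on_u_Icc: "0 \<le> a \<Longrightarrow> continuous_on {a..b} u"
  by (rule continuous_on_subset[OF u_cont]) auto

lemma has_right_derivative_inner_u:
  assumes "t > 0"
  shows "((\<lambda>r. inner (u r) w) has_real_derivative - inner (Z t) w) (at t within {t..})"
proof -
  have "(u has_derivative (\<lambda>h. h *\<^sub>R - Z t)) (at t within {t..})"
    using u_has_right_derivative[OF assms] by (simp add: has_vector_derivative_def)
  from has_derivative_inner_left[OF this, of w]
  have "((\<lambda>r. inner (u r) w) has_derivative (\<lambda>h. inner (h *\<^sub>R - Z t) w)) (at t within {t..})" .
  moreover have "(\<lambda>h. inner (h *\<^sub>R - Z t) w) = (*) (- inner (Z t) w)"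
    by (auto simp: fun_eq_iff)
  ultimately show ?thesis by (simp add: has_field_derivative_def)
qed

lemma has_right_derivative_norm_sq:
  assumes "t > 0"
  shows "((\<lambda>r. inner (u r) (u r)) has_real_derivative - 2 * p * energy t) (at t within {t..})"
proof -
  have "(u has_derivative (\<lambda>h. h *\<^sub>R - Z t)) (at t within {t..})"
    using u_has_right_derivative[OF assms] by (simp add: has_vector_derivative_def)
  from has_derivative_inner[OF this this]
  have "((\<lambda>r. inner (u r) (u r)) has_derivative
      (\<lambda>h. inner (u t) (h *\<^sub>R - Z t) + inner (h *\<^sub>R - Z t) (u t))) (at t within {t..})" .
  moreover have "(\<lambda>h. inner (u t) (h *\<^sub>R - Z t) + inner (h *\<^sub>R - Z t) (u t)) = (*) (- 2 * p * energy t)"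
    using inner_Z_u[OF assms] by (auto simp: fun_eq_iff inner_commute)
  ultimately show ?thesis by (simp add: has_field_derivative_def)
qed

lemma has_right_derivative_norm:
  assumes "t > 0" "u t \<noteq> 0"
  shows "((\<lambda>r. norm (u r)) has_real_derivative - p * energy t / norm (u t)) (at t within {t..})"
proof -
  have "(norm has_derivative (\<lambda>h. inner h (sgn (u t)))) (at (u t) within u ` {t..})"
    using has_derivative_norm[OF assms(2)] by (rule has_derivative_at_withinI)
  from vector_derivative_diff_chain_within[OF u_has_right_derivative[OF assms(1)] this]
  have "(norm \<circ> u has_vector_derivative inner (- Z t) (sgn (u t))) (at t within {t..})" .
  moreover have "inner (- Z t) (sgn (u t)) = - p * energy t / norm (u t)"
    using inner_Z_u[OF assms(1)] by (simp add: sgn_div_norm inner_commute divide_inverse mult.commute)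
  ultimately show ?thesis by (simp add: has_real_derivative_iff_has_vector_derivative o_def)
qed

lemma inner_u_nullspace:
  assumes t: "0 \<le> t" and n: "n \<in> nullspace J"
  shows "inner (u t) n = 0"
proof -
  have cont: "continuous_on {0..t} (\<lambda>r. inner (u r) n)"
    by (intro continuous_on_inner continuous_on_u_Icc continuous_on_const) simp
  have deriv: "((\<lambda>r. inner (u r) n) has_real_derivative 0) (at r within {r..})" if "r \<in> {0<..<t}" for r
    using has_right_derivative_inner_u[of r n] subdiff_orthogonal_nullspace[OF Z_subdiff n] that by simp
  have "inner (u t) n - inner (u 0) n \<le> 0 * (t - 0)"
    by (rule right_derivative_le_imp_le[OF t cont deriv]) auto
  moreover have "0 * (t - 0) \<le> inner (u t) n - inner (u 0) n"
    by (rule right_derivative_ge_imp_ge[OF t cont deriv]) auto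
  moreover have "inner (u 0) n = 0"
    using f_H0 n u_0 by (simp add: H0_def)
  ultimately show ?thesis by simp
qed

lemma norm_u_antimono:
  assumes "0 \<le> s" "s \<le> t"
  shows "norm (u t) \<le> norm (u s)"
proof -
  have "inner (u t) (u t) - inner (u s) (u s) \<le> 0 * (t - s)"
  proof (rule right_derivative_le_imp_le[OF assms(2)])
    show "continuous_on {s..t} (\<lambda>r. inner (u r) (u r))"
      using assms(1) by (intro continuous_on_inner continuous_on_u_Icc)
    fix r assume "r \<in> {s<..<t}"
    with assms(1) have "r > 0" by simp
    then show "((\<lambda>r. inner (u r) (u r)) has_real_derivative - 2 * p * energy r) (at r within {r..})"
      and "- 2 * p * energy r \<le> 0"
      using has_right_derivative_norm_sq energy_nonneg p_pos by auto
  qed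
  then have "(norm (u t))\<^sup>2 \<le> (norm (u s))\<^sup>2"
    by (simp add: power2_norm_eq_inner)
  then show ?thesis
    by (rule power2_le_imp_le) simp
qed

lemma u_eq_0_persists: "0 \<le> s \<Longrightarrow> s \<le> t \<Longrightarrow> u s = 0 \<Longrightarrow> u t = 0"
  using norm_u_antimono[of s t] by simp

lemma u_in_H0: "0 \<le> t \<Longrightarrow> u t \<noteq> 0 \<Longrightarrow> u t \<in> H0 J"
  using inner_u_nullspace by (auto simp: H0_def)

lemma ex_u_nonzero: "\<exists>t>0. u t \<noteq> 0"
proof (rule ccontr)
  assume "\<not> ?thesis"
  then have zero: "u t = 0" if "t > 0" for t
    using that by auto
  have "\<forall>\<^sub>F t in at_right 0. u t = 0"
    using eventually_at_right_less[of "0::real"] by (rule eventually_mono) (rule zero)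
  then have "(u \<longlongrightarrow> 0) (at_right 0)"
    by (rule tendsto_eventually)
  moreover have "(u \<longlongrightarrow> u 0) (at_right 0)"
    using u_cont unfolding continuous_on_def at_within_Ici_at_right[symmetric] by auto
  ultimately have "u 0 = 0"
    using tendsto_unique trivial_limit_at_right_real by blast
  then show False using f_H0 u_0 by (simp add: H0_def)
qed

definition rayleigh :: "real \<Rightarrow> real" where
  "rayleigh t = p * energy t / norm (u t) powr p"

lemma Rayleigh_eq_rayleigh: "t > 0 \<Longrightarrow> u t \<noteq> 0 \<Longrightarrow> Rayleigh p J u t = ereal (rayleigh t)"
  using J_u_eq_energy[of t] by (simp add: Rayleigh_def rayleigh_def)

lemma lambda1_le_Rayleigh: "t > 0 \<Longrightarrow> u t \<noteq> 0 \<Longrightarrow> lambda1 p J \<le> Rayleigh p J u t"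
  unfolding lambda1_def Rayleigh_def by (rule INF_lower) (simp add: u_in_H0)

definition lam1 :: real where
  "lam1 = real_of_ereal (lambda1 p J)"

lemma lambda1_eq_lam1: "lambda1 p J = ereal lam1"
proof -
  obtain t where t: "t > 0" "u t \<noteq> 0" using ex_u_nonzero by blast
  have "lambda1 p J \<le> ereal (rayleigh t)"
    using lambda1_le_Rayleigh[OF t] Rayleigh_eq_rayleigh[OF t] by simp
  then have "lambda1 p J \<noteq> \<infinity>" by auto
  then show ?thesis
    using lambda1_pos unfolding lam1_def by (cases "lambda1 p J") auto
qed

lemma lam1_pos: "0 < lam1"
  using lambda1_pos lambda1_eq_lam1 by simp

lemma lam1_le_rayleigh: "t > 0 \<Longrightarrow> u t \<noteq> 0 \<Longrightarrow> lam1 \<le> rayleigh t"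
  using lambda1_le_Rayleigh Rayleigh_eq_rayleigh lambda1_eq_lam1 by fastforce

lemma energy_pos:
  assumes "t > 0" "u t \<noteq> 0"
  shows "0 < energy t"
proof -
  have "0 < p * energy t / norm (u t) powr p"
    using lam1_le_rayleigh[OF assms] lam1_pos by (simp add: rayleigh_def)
  then have "0 < p * energy t"
    using assms(2) by (simp add: zero_less_divide_iff)
  then show ?thesis
    using p_pos by (simp add: zero_less_mult_iff)
qed

lemma difference_quotient_tendsto:
  assumes "t > 0"
  shows "((\<lambda>y. (1 / (y - t)) *\<^sub>R (u y - u t)) \<longlongrightarrow> - Z t) (at_right t)"
proof -
  have "(u has_derivative (\<lambda>h. h *\<^sub>R - Z t)) (at t within {t..})"
    using u_has_right_derivative[OF assms] by (simp add: has_vector_derivative_def)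
  then have "((\<lambda>y. (1 / norm (y - t)) *\<^sub>R (u y - (u t + (y - t) *\<^sub>R - Z t))) \<longlongrightarrow> 0) (at_right t)"
    unfolding has_derivative_within at_within_Ici_at_right by blast
  then have "((\<lambda>y. (1 / norm (y - t)) *\<^sub>R (u y - (u t + (y - t) *\<^sub>R - Z t)) - Z t) \<longlongrightarrow> 0 - Z t) (at_right t)"
    by (intro tendsto_diff tendsto_const)
  moreover have "\<forall>\<^sub>F y in at_right t.
      (1 / norm (y - t)) *\<^sub>R (u y - (u t + (y - t) *\<^sub>R - Z t)) - Z t = (1 / (y - t)) *\<^sub>R (u y - u t)"
    using eventually_at_right_less[of t]
    by eventually_elim (simp add: scaleR_diff_right scaleR_add_right)
  ultimately show ?thesis by (simp add: tendsto_cong)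
qed

lemma norm_Z_le_lipschitz:
  assumes L: "L-lipschitz_on {\<delta>..} u" and "0 < \<delta>" "\<delta> \<le> t"
  shows "norm (Z t) \<le> L"
proof -
  have "norm (- Z t) \<le> L"
  proof (rule Lim_norm_ubound[OF trivial_limit_at_right_real difference_quotient_tendsto])
    show "\<forall>\<^sub>F y in at_right t. norm ((1 / (y - t)) *\<^sub>R (u y - u t)) \<le> L"
      using eventually_at_right_less[of t]
    proof eventually_elim
      case (elim y)
      have "norm (u y - u t) \<le> L * (y - t)"
        using lipschitz_onD[OF L, of y t] elim assms by (simp add: dist_norm)
      with elim show ?case by (simp add: divide_le_eq)
    qed
  qed (use assms in simp)
  then show ?thesis by simp
qed

lemma energy_lipschitz:
  assumes L: "L-lipschitz_on {\<delta>..} u" and \<delta>: "0 < \<delta>"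
  shows "(L * L)-lipschitz_on {\<delta>..} energy"
proof (rule lipschitz_onI)
  show "0 \<le> L * L" by simp
  have one_sided: "energy r - energy s \<le> L * L * dist r s" if r: "r \<in> {\<delta>..}" and s: "s \<in> {\<delta>..}" for r s
  proof -
    from r s \<delta> have "r > 0" "s > 0" by auto
    have "energy r - energy s \<le> inner (Z r) (u r - u s)"
      using subgradient_inequality[OF Z_subdiff J_u_eq_energy J_u_eq_energy, of r s] \<open>r > 0\<close> \<open>s > 0\<close>
      by (simp add: inner_diff_right)
    also have "\<dots> \<le> norm (Z r) * norm (u r - u s)"
      by (rule norm_cauchy_schwarz)
    also have "\<dots> \<le> L * (L * dist r s)"
      using norm_Z_le_lipschitz[OF L \<delta>] lipschitz_onD[OF L r s] lipschitz_on_nonneg[OF L] r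
      by (intro mult_mono) (auto simp: dist_norm)
    finally show ?thesis by simp
  qed
  fix r s assume "r \<in> {\<delta>..}" "s \<in> {\<delta>..}"
  with one_sided[of r s] one_sided[of s r] show "dist (energy r) (energy s) \<le> L * L * dist r s"
    by (auto simp: dist_real_def abs_le_iff abs_minus_commute)
qed

lemma continuous_on_energy_Icc: "0 < a \<Longrightarrow> continuous_on {a..b} energy"
  using u_lipschitz[of a] energy_lipschitz
  by (meson atLeastAtMost_iff atLeast_iff continuous_on_subset lipschitz_on_continuous_on subsetI)

lemma continuous_on_norm_powr_Icc: "0 \<le> a \<Longrightarrow> continuous_on {a..b} (\<lambda>r. norm (u r) powr (2 - p))"
  using p_less_2 by (intro continuous_on_powr' continuous_on_norm continuous_on_u_Icc continuous_on_const) auto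

lemma has_right_derivative_norm_powr:
  assumes "t > 0" "u t \<noteq> 0"
  shows "((\<lambda>r. norm (u r) powr (2 - p)) has_real_derivative - (2 - p) * rayleigh t) (at t within {t..})"
proof -
  have D: "((\<lambda>r. norm (u r) powr (2 - p)) has_real_derivative
      (2 - p) * norm (u t) powr (1 - p) * (- p * energy t / norm (u t))) (at t within {t..})"
    using DERIV_chain2[OF has_real_derivative_powr has_right_derivative_norm[OF assms], of "2 - p"] assms
    by simp
  have "norm (u t) powr (1 - p) = norm (u t) / norm (u t) powr p"
    by (simp add: powr_diff)
  then have "(2 - p) * norm (u t) powr (1 - p) * (- p * energy t / norm (u t)) = - (2 - p) * rayleigh t"
    using assms by (simp add: rayleigh_def field_simps)
  then show ?thesis
    using D by (simp only:)
qed

lemma norm_powr_decrease_ge: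
  assumes "0 \<le> s" "s \<le> t" and nz: "\<And>r. r \<in> {s<..<t} \<Longrightarrow> u r \<noteq> 0"
  shows "(2 - p) * lam1 * (t - s) \<le> norm (u s) powr (2 - p) - norm (u t) powr (2 - p)"
proof -
  have "norm (u t) powr (2 - p) - norm (u s) powr (2 - p) \<le> - (2 - p) * lam1 * (t - s)"
  proof (rule right_derivative_le_imp_le[OF assms(2) continuous_on_norm_powr_Icc[OF assms(1)]])
    fix r assume r: "r \<in> {s<..<t}"
    with assms(1) have "r > 0" by simp
    then show "((\<lambda>r. norm (u r) powr (2 - p)) has_real_derivative - (2 - p) * rayleigh r) (at r within {r..})"
      and "- (2 - p) * rayleigh r \<le> - (2 - p) * lam1"
      using has_right_derivative_norm_powr lam1_le_rayleigh nz[OF r] p_less_2 by auto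
  qed
  then show ?thesis by (simp add: algebra_simps)
qed

lemma norm_powr_decrease_le:
  assumes "0 \<le> s" "s \<le> t" and nz: "\<And>r. r \<in> {s<..<t} \<Longrightarrow> u r \<noteq> 0"
    and bound: "\<And>r. r \<in> {s<..<t} \<Longrightarrow> rayleigh r \<le> c"
  shows "norm (u s) powr (2 - p) - norm (u t) powr (2 - p) \<le> (2 - p) * c * (t - s)"
proof -
  have "- (2 - p) * c * (t - s) \<le> norm (u t) powr (2 - p) - norm (u s) powr (2 - p)"
  proof (rule right_derivative_ge_imp_ge[OF assms(2) continuous_on_norm_powr_Icc[OF assms(1)]])
    fix r assume r: "r \<in> {s<..<t}"
    with assms(1) have "r > 0" by simp
    then show "((\<lambda>r. norm (u r) powr (2 - p)) has_real_derivative - (2 - p) * rayleigh r) (at r within {r..})"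
      and "- (2 - p) * c \<le> - (2 - p) * rayleigh r"
      using has_right_derivative_norm_powr bound[OF r] nz[OF r] p_less_2 by auto
  qed
  then show ?thesis by (simp add: algebra_simps)
qed

lemma ex_extinct: "\<exists>t>0. u t = 0"
proof (rule ccontr)
  assume "\<not> ?thesis"
  then have nz: "u r \<noteq> 0" if "r > 0" for r
    using that by auto
  define R where "R = norm (u 0) powr (2 - p) / ((2 - p) * lam1) + 1"
  have pos: "(2 - p) * lam1 > 0" using p_less_2 lam1_pos by simp
  then have "0 \<le> norm (u 0) powr (2 - p) / ((2 - p) * lam1)"
    by simp
  then have "R > 0"
    unfolding R_def by linarith
  then have "(2 - p) * lam1 * (R - 0) \<le> norm (u 0) powr (2 - p) - norm (u R) powr (2 - p)"
    by (intro norm_powr_decrease_ge) (auto simp: nz)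
  also have "\<dots> \<le> norm (u 0) powr (2 - p)"
    by simp
  also have "\<dots> < (2 - p) * lam1 * R"
    using pos p_less_2 lam1_pos by (simp add: R_def distrib_left)
  finally show False by simp
qed

lemma extinction_times_nonempty: "extinction_times u \<noteq> {}"
proof -
  obtain t where "t > 0" "u t = 0" using ex_extinct by blast
  then have "t \<in> extinction_times u"
    unfolding extinction_times_def using u_eq_0_persists[of t] by auto
  then show ?thesis by blast
qed

lemma bdd_below_extinction_times: "bdd_below (extinction_times u)"
  unfolding bdd_below_def extinction_times_def by (rule exI[of _ 0]) auto

lemma T_ex_nonneg: "0 \<le> T_ex u"
  unfolding T_ex_def using extinction_times_nonempty
  by (intro cInf_greatest) (auto simp: extinction_times_def)

lemma u_nonzero_before_T_ex:
  assumes "0 < t" "t < T_ex u"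
  shows "u t \<noteq> 0"
proof
  assume "u t = 0"
  then have "t \<in> extinction_times u"
    unfolding extinction_times_def using u_eq_0_persists[of t] assms by auto
  then have "T_ex u \<le> t"
    unfolding T_ex_def using bdd_below_extinction_times by (rule cInf_lower)
  then show False using assms by simp
qed

lemma u_T_ex: "u (T_ex u) = 0"
proof -
  have "u y = 0" if y: "T_ex u < y" for y
  proof -
    obtain e where "e \<in> extinction_times u" "e < y"
      using cInf_less_iff[OF extinction_times_nonempty bdd_below_extinction_times] y
      unfolding T_ex_def by auto
    then show ?thesis by (auto simp: extinction_times_def)
  qed
  then have "(u \<longlongrightarrow> 0) (at_right (T_ex u))"
    using eventually_at_right_less[of "T_ex u"]
    by (intro tendsto_eventually) (rule eventually_mono)
  moreover have "(u \<longlongrightarrow> u (T_ex u)) (at_right (T_ex u))"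
    using u_cont T_ex_nonneg unfolding continuous_on_def
    by (auto intro: tendsto_within_subset)
  ultimately show ?thesis
    using tendsto_unique trivial_limit_at_right_real by blast
qed

text \<open>\<open>Z\<close> need not be right-continuous, but it is "frequently almost" so from the point of view
  of \<open>Z x\<close>: otherwise \<open>\<langle>u r, Z x\<rangle>\<close> would decrease strictly slower than its right derivative
  \<open>-\<parallel>Z x\<parallel>\<^sup>2\<close> at \<open>x\<close> allows.\<close>

lemma frequently_inner_Z_ge:
  assumes x: "x > 0" and e: "e > 0"
  shows "\<exists>\<^sub>F r in at_right x. (norm (Z x))\<^sup>2 - e \<le> inner (Z x) (Z r)"
proof (rule ccontr)
  define a where "a = Z x"
  assume "\<not> ?thesis"
  then have "\<forall>\<^sub>F r in at_right x. inner a (Z r) < (norm a)\<^sup>2 - e"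
    unfolding not_frequently a_def by (simp add: not_le)
  then obtain b where "b > x" and small: "\<And>r. x < r \<Longrightarrow> r < b \<Longrightarrow> inner a (Z r) < (norm a)\<^sup>2 - e"
    unfolding eventually_at_right[of x "x + 1", simplified] by auto
  have "((\<lambda>y. (inner (u y) a - inner (u x) a) / (y - x)) \<longlongrightarrow> - (norm a)\<^sup>2) (at_right x)"
    using has_right_derivative_inner_u[OF x, of a]
    unfolding has_field_derivative_iff at_within_Ici_at_right by (simp add: a_def power2_norm_eq_inner)
  then have "\<forall>\<^sub>F y in at_right x. (inner (u y) a - inner (u x) a) / (y - x) < - (norm a)\<^sup>2 + e"
    using e by (intro order_tendstoD(2)) auto
  moreover have "\<forall>\<^sub>F y in at_right x. x < y \<and> y < b"
    unfolding eventually_at_right[OF \<open>b > x\<close>] by (intro exI[of _ b]) (use \<open>b > x\<close> in auto)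
  ultimately obtain y where y: "(inner (u y) a - inner (u x) a) / (y - x) < - (norm a)\<^sup>2 + e" "x < y" "y < b"
    using eventually_happens[OF eventually_conj] trivial_limit_at_right_real by blast
  have "(e - (norm a)\<^sup>2) * (y - x) \<le> inner (u y) a - inner (u x) a"
  proof (rule right_derivative_ge_imp_ge)
    show "continuous_on {x..y} (\<lambda>r. inner (u r) a)"
      using x by (intro continuous_on_inner continuous_on_u_Icc continuous_on_const) simp
    fix r assume r: "r \<in> {x<..<y}"
    then show "((\<lambda>r. inner (u r) a) has_real_derivative - inner (Z r) a) (at r within {r..})"
      using has_right_derivative_inner_u x by simp
    show "e - (norm a)\<^sup>2 \<le> - inner (Z r) a"
      using small[of r] r y by (simp add: inner_commute)
  qed (use y in simp)
  moreover have "inner (u y) a - inner (u x) a < (e - (norm a)\<^sup>2) * (y - x)"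
    using y by (simp add: divide_less_eq)
  ultimately show False by linarith
qed

lemma energy_lower_right_Dini:
  assumes x: "x > 0"
  shows "lower_right_Dini_le energy x (- (norm (Z x))\<^sup>2)"
  unfolding lower_right_Dini_le_def
proof (intro allI impI)
  fix e :: real assume e: "0 < e"
  define a where "a = Z x"
  obtain L where L: "L-lipschitz_on {x..} u" using u_lipschitz[OF x] by blast
  have L0: "0 \<le> L" using lipschitz_on_nonneg[OF L] .
  define q where "q = (\<lambda>y. (1 / (y - x)) *\<^sub>R (u y - u x))"
  have "\<exists>\<^sub>F y in at_right x. (norm a)\<^sup>2 - e/2 \<le> inner a (Z y)"
    using frequently_inner_Z_ge[OF x, of "e/2"] e by (simp add: a_def)
  moreover have "\<forall>\<^sub>F y in at_right x. norm (q y + a) < e/2 / (L + 1) \<and> x < y"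
  proof (rule eventually_conj)
    have "((\<lambda>y. q y + a) \<longlongrightarrow> 0) (at_right x)"
      using tendsto_add[OF difference_quotient_tendsto[OF x] tendsto_const[of a]] by (simp add: a_def q_def)
    then show "\<forall>\<^sub>F y in at_right x. norm (q y + a) < e/2 / (L + 1)"
      using e L0 by (auto dest: tendstoD[of _ 0 _ "e/2 / (L + 1)"] simp: dist_norm)
  qed (rule eventually_at_right_less)
  ultimately show "\<exists>\<^sub>F y in at_right x. energy y \<le> energy x + (- (norm (Z x))\<^sup>2 + e) * (y - x)"
  proof (rule frequently_eventually_frequently[THEN frequently_elim1], elim conjE)
    fix y
    assume close: "(norm a)\<^sup>2 - e/2 \<le> inner a (Z y)" "norm (q y + a) < e/2 / (L + 1)" and "x < y"
    with x have y: "y > 0" by simp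
    have "energy y - energy x \<le> inner (Z y) (u y - u x)"
      using subgradient_inequality[OF Z_subdiff J_u_eq_energy J_u_eq_energy, of y x] x y
      by (simp add: inner_diff_right)
    also have "\<dots> = (y - x) * inner (Z y) (q y)"
      using \<open>x < y\<close> by (simp add: q_def)
    also have "\<dots> = (y - x) * (- inner a (Z y) + inner (Z y) (q y + a))"
      by (simp add: inner_add_right inner_commute)
    also have "\<dots> \<le> (y - x) * (- (norm a)\<^sup>2 + e)"
    proof -
      have "inner (Z y) (q y + a) \<le> norm (Z y) * norm (q y + a)"
        by (rule norm_cauchy_schwarz)
      also have "\<dots> \<le> L * (e/2 / (L + 1))"
        using norm_Z_le_lipschitz[OF L x, of y] close(2) \<open>x < y\<close> L0 by (intro mult_mono) auto
      also have "\<dots> \<le> e/2"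
        using L0 e by (simp add: field_simps)
      finally show ?thesis
        using close(1) \<open>x < y\<close> by (intro mult_left_mono) auto
    qed
    finally show "energy y \<le> energy x + (- (norm (Z x))\<^sup>2 + e) * (y - x)"
      by (simp add: a_def algebra_simps)
  qed
qed

lemma eventually_u_nonzero:
  assumes "x \<ge> 0" "u x \<noteq> 0"
  shows "\<forall>\<^sub>F y in at_right x. u y \<noteq> 0"
proof -
  have "(u \<longlongrightarrow> u x) (at_right x)"
    using u_cont assms(1) unfolding continuous_on_def by (auto intro: tendsto_within_subset)
  then show ?thesis
    using assms(2) by (rule tendsto_imp_eventually_ne)
qed

lemma log_rayleigh_lower_right_Dini:
  assumes x: "x > 0" "u x \<noteq> 0"
  shows "lower_right_Dini_le (\<lambda>r. ln (energy r) - p * ln (norm (u r))) x 0"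
proof -
  define E N where "E = energy x" and "N = norm (u x)"
  have E: "0 < E" and N: "0 < N"
    using energy_pos[OF x] x by (simp_all add: E_def N_def)
  have "\<forall>\<^sub>F y in at_right x. 0 < energy y"
    using eventually_u_nonzero[OF less_imp_le[OF x(1)] x(2)] eventually_at_right_less[of x]
    by eventually_elim (use x(1) in \<open>auto intro: energy_pos\<close>)
  from lower_right_Dini_le_ln[OF energy_lower_right_Dini[OF x(1)] energy_pos[OF x] this]
  have ln_energy: "lower_right_Dini_le (\<lambda>r. ln (energy r)) x (- (norm (Z x))\<^sup>2 / E)"
    by (simp add: E_def)
  have "((\<lambda>r. ln (norm (u r))) has_real_derivative 1 / N * (- p * E / N)) (at x within {x..})"
    using DERIV_chain2[OF DERIV_ln_divide has_right_derivative_norm[OF x]] N by (simp add: E_def N_def)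
  from DERIV_cmult[OF this, of "- p"]
  have ln_norm: "((\<lambda>r. - p * ln (norm (u r))) has_real_derivative p * p * E / N\<^sup>2) (at x within {x..})"
    by (simp add: power2_eq_square mult.assoc)
  have "(p * E)\<^sup>2 \<le> (norm (Z x))\<^sup>2 * N\<^sup>2"
    using Cauchy_Schwarz_ineq[of "Z x" "u x"] inner_Z_u[OF x(1)]
    by (simp add: E_def N_def power2_norm_eq_inner)
  then have "p * p * E / N\<^sup>2 \<le> (norm (Z x))\<^sup>2 / E"
    using E N by (simp add: field_simps power2_eq_square)
  then have "lower_right_Dini_le (\<lambda>r. ln (energy r) + - p * ln (norm (u r))) x 0"
    by (intro lower_right_Dini_le_mono[OF lower_right_Dini_le_add_right_derivative[OF ln_energy ln_norm]])
      simp
  then show ?thesis by simp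
qed

lemma rayleigh_antimono:
  assumes s: "0 < s" "s \<le> t" and nz: "\<And>r. s \<le> r \<Longrightarrow> r \<le> t \<Longrightarrow> u r \<noteq> 0"
  shows "rayleigh t \<le> rayleigh s"
proof -
  have pos: "energy r \<noteq> 0" "norm (u r) \<noteq> 0" if "s \<le> r" "r \<le> t" for r
    using energy_pos[of r] nz[OF that] that s by auto
  have "ln (energy t) - p * ln (norm (u t)) \<le> ln (energy s) - p * ln (norm (u s))"
  proof (rule lower_right_Dini_nonpos_imp_le[OF s(2)])
    show "continuous_on {s..t} (\<lambda>r. ln (energy r) - p * ln (norm (u r)))"
      using s by (intro continuous_intros continuous_on_energy_Icc continuous_on_u_Icc) (auto simp: pos nz)
  qed (use s nz in \<open>auto intro: log_rayleigh_lower_right_Dini\<close>)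
  moreover have "rayleigh r = p * exp (ln (energy r) - p * ln (norm (u r)))" if "s \<le> r" "r \<le> t" for r
    using energy_pos[of r] nz[OF that] that s by (simp add: rayleigh_def exp_diff powr_def)
  ultimately show ?thesis
    using s p_pos by simp
qed

lemma norm_powr_bounds:
  assumes t: "0 < t" "t < T_ex u"
  shows "(2 - p) * lam1 * (T_ex u - t) \<le> norm (u t) powr (2 - p)"
    and "norm (u t) powr (2 - p) \<le> (2 - p) * rayleigh t * (T_ex u - t)"
proof -
  have nz: "u r \<noteq> 0" if "t \<le> r" "r < T_ex u" for r
    using u_nonzero_before_T_ex that t by simp
  show "(2 - p) * lam1 * (T_ex u - t) \<le> norm (u t) powr (2 - p)"
    using norm_powr_decrease_ge[of t "T_ex u"] t nz u_T_ex by simp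
  have "rayleigh r \<le> rayleigh t" if r: "r \<in> {t<..<T_ex u}" for r
  proof (rule rayleigh_antimono)
    show "u q \<noteq> 0" if "t \<le> q" "q \<le> r" for q
      using that r by (intro nz) auto
  qed (use r t in auto)
  then show "norm (u t) powr (2 - p) \<le> (2 - p) * rayleigh t * (T_ex u - t)"
    using norm_powr_decrease_le[of t "T_ex u"] t nz u_T_ex by simp
qed

end

theorem corollary4:
  fixes J :: "'a::{real_inner, complete_space} \<Rightarrow> ereal"
    and p :: real and f :: 'a and u :: "real \<Rightarrow> 'a"
  assumes p: "1 \<le> p" "p < 2"
    and conv: "convex_fun J" and lsc: "lsc_fun J" and proper: "proper_fun J"
    and dense: "closure (eff_dom J) = UNIV"
    and hom: "abs_homogeneous p J"
    and coerc: "lambda1 p J > 0"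
    and f: "f \<in> H0 J"
    and flow: "gradient_flow J f u"
  shows "extinction_times u \<noteq> {} \<and>
    (\<forall>t. 0 < t \<and> t < T_ex u \<longrightarrow>
       ereal (2 - p) * lambda1 p J * ereal (T_ex u - t) \<le> ereal (norm (u t) powr (2 - p)) \<and>
       ereal (norm (u t) powr (2 - p)) \<le> ereal (2 - p) * Rayleigh p J u t * ereal (T_ex u - t))"
proof -
  obtain Z where Z: "\<And>t. t > 0 \<Longrightarrow> Z t \<in> subdiff J (u t) \<and> (u has_vector_derivative - Z t) (at t within {t..})"
    using flow unfolding gradient_flow_def by metis
  interpret subgradient_flow J p u Z f
    using p conv proper hom coerc f flow Z unfolding gradient_flow_def
    by unfold_locales auto
  show ?thesis
  proof (intro conjI allI impI)
    show "extinction_times u \<noteq> {}"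
      by (rule extinction_times_nonempty)
    fix t assume t: "0 < t \<and> t < T_ex u"
    then have "Rayleigh p J u t = ereal (rayleigh t)"
      using Rayleigh_eq_rayleigh u_nonzero_before_T_ex by simp
    then show "ereal (2 - p) * lambda1 p J * ereal (T_ex u - t) \<le> ereal (norm (u t) powr (2 - p))"
      and "ereal (norm (u t) powr (2 - p)) \<le> ereal (2 - p) * Rayleigh p J u t * ereal (T_ex u - t)"
      using norm_powr_bounds[of t] t lambda1_eq_lam1 by simp_all
  qed
qed

end
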